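(* There is no split graph $(S,K,I)$ such that the factor graph $\Phi(S)$ contains an induced path $v_5v_4v_1v_2v_3$ (on five distinct vertices, in this order along the path) with $\max\{d_i: i\in[5]\}=d_1$.
   Context: A split graph $(S,K,I)$ is a graph $S$ together with a fixed partition $V(S)=K\dot\cup I$, where $K$ is a clique and $I$ is an independent set. For a vertex $v_i$ of $S$, $N_i$ denotes its open neighborhood in $S$ and $d_i=|N_i|$ its degree in $S$; for $u,v$ write $\eta_{uv}=|N_u\cap N_v|$. The factor graph $\Phi(S)$ is the loopless multigraph with vertex set $I$ in which, for distinct $u,v\in I$, there is one edge joining $u$ and $v$ for each 2-switch of $S$ acting on $u$ and $v$ (a 2-switch replaces edges $ab,cd$ with $ac,bd$ when $ab,cd\in E(S)$ and $ac,bd\notin E(S)$); equivalently, the multiplicity of the edge $uv$ is $\sigma_{uv}=(d_u-\eta_{uv})(d_v-\eta_{uv})$, and $u,v$ are adjacent iff $\sigma_{uv}>0$. An induced path in $\Phi(S)$ consists of distinct vertices, consecutive ones adjacent and no other pair adjacent (multiplicities ignored for adjacency). *)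

theory Defs
  imports Main
begin

definition simple_graph :: "'a set \<Rightarrow> ('a \<Rightarrow> 'a \<Rightarrow> bool) \<Rightarrow> bool" where
  "simple_graph V E \<longleftrightarrow> finite V \<and> (\<forall>x y. E x y \<longrightarrow> x \<in> V \<and> y \<in> V)
     \<and> (\<forall>x y. E x y \<longrightarrow> E y x) \<and> (\<forall>x. \<not> E x x)"

definition split_graph :: "'a set \<Rightarrow> ('a \<Rightarrow> 'a \<Rightarrow> bool) \<Rightarrow> 'a set \<Rightarrow> 'a set \<Rightarrow> bool" where
  "split_graph V E K I \<longleftrightarrow> simple_graph V E \<and> K \<union> I = V \<and> K \<inter> I = {}
     \<and> (\<forall>x\<in>K. \<forall>y\<in>K. x \<noteq> y \<longrightarrow> E x y)
     \<and> (\<forall>x\<in>I. \<forall>y\<in>I. \<not> E x y)"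

definition nbhd :: "'a set \<Rightarrow> ('a \<Rightarrow> 'a \<Rightarrow> bool) \<Rightarrow> 'a \<Rightarrow> 'a set" where
  "nbhd V E v = {u \<in> V. E v u}"

definition deg :: "'a set \<Rightarrow> ('a \<Rightarrow> 'a \<Rightarrow> bool) \<Rightarrow> 'a \<Rightarrow> nat" where
  "deg V E v = card (nbhd V E v)"

definition eta :: "'a set \<Rightarrow> ('a \<Rightarrow> 'a \<Rightarrow> bool) \<Rightarrow> 'a \<Rightarrow> 'a \<Rightarrow> nat" where
  "eta V E u v = card (nbhd V E u \<inter> nbhd V E v)"

text \<open>Multiplicity sigma_uv of the edge uv in the factor graph.\<close>
definition sigma :: "'a set \<Rightarrow> ('a \<Rightarrow> 'a \<Rightarrow> bool) \<Rightarrow> 'a \<Rightarrow> 'a \<Rightarrow> nat" where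
  "sigma V E u v = (deg V E u - eta V E u v) * (deg V E v - eta V E u v)"

definition factor_adj :: "'a set \<Rightarrow> ('a \<Rightarrow> 'a \<Rightarrow> bool) \<Rightarrow> 'a set \<Rightarrow> 'a \<Rightarrow> 'a \<Rightarrow> bool" where
  "factor_adj V E I u v \<longleftrightarrow> u \<in> I \<and> v \<in> I \<and> u \<noteq> v \<and> sigma V E u v > 0"

definition induced_path :: "('a \<Rightarrow> 'a \<Rightarrow> bool) \<Rightarrow> 'a list \<Rightarrow> bool" where
  "induced_path A p \<longleftrightarrow> distinct p \<and>
     (\<forall>i<length p. \<forall>j<length p. i < j \<longrightarrow> (A (p!i) (p!j) \<longleftrightarrow> j = i + 1))"

end

theory Submission
  imports Defs
begin

text \<open>
  In a finite graph, \<open>\<sigma>\<^sub>u\<^sub>v = |N\<^sub>u - N\<^sub>v| \<cdot> |N\<^sub>v - N\<^sub>u|\<close>, so two vertices of \<open>I\<close> are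
  adjacent in the factor graph exactly when their neighbourhoods are incomparable under
  inclusion, and comparable neighbourhoods are nested according to degree.  If \<open>d\<^sub>1\<close> is
  maximal on the path \<open>v\<^sub>5v\<^sub>4v\<^sub>1v\<^sub>2v\<^sub>3\<close>, then \<open>N\<^sub>3, N\<^sub>5 \<subseteq> N\<^sub>1\<close>; this forces \<open>N\<^sub>5 \<subseteq> N\<^sub>2\<close> and
  \<open>N\<^sub>3 \<subseteq> N\<^sub>4\<close>, and then either nesting of \<open>N\<^sub>2, N\<^sub>4\<close> makes a path edge comparable.
\<close>

lemma finite_nbhd: "finite V \<Longrightarrow> finite (nbhd V E v)"
  unfolding nbhd_def by simp

lemma deg_minus_eta_eq_card_Diff:
  assumes "finite V"
  shows "deg V E u - eta V E u v = card (nbhd V E u - nbhd V E v)"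
  unfolding deg_def eta_def
  using assms by (simp add: card_Diff_subset_Int finite_nbhd flip: Diff_Int2)

lemma sigma_pos_iff_incomparable:
  assumes "finite V"
  shows "sigma V E u v > 0 \<longleftrightarrow> \<not> nbhd V E u \<subseteq> nbhd V E v \<and> \<not> nbhd V E v \<subseteq> nbhd V E u"
proof -
  have "sigma V E u v = card (nbhd V E u - nbhd V E v) * card (nbhd V E v - nbhd V E u)"
    unfolding sigma_def deg_minus_eta_eq_card_Diff[OF assms]
    using deg_minus_eta_eq_card_Diff[OF assms, of E v u] by (simp add: eta_def Int_commute)
  then show ?thesis
    using assms by (auto simp: card_gt_0_iff finite_nbhd)
qed

lemma factor_adj_iff_incomparable:
  assumes "finite V" "u \<in> I" "v \<in> I" "u \<noteq> v"
  shows "factor_adj V E I u v \<longleftrightarrow> \<not> nbhd V E u \<subseteq> nbhd V E v \<and> \<not> nbhd V E v \<subseteq> nbhd V E u"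
  using assms by (simp add: factor_adj_def sigma_pos_iff_incomparable)

lemma nbhd_subset_if_comparable_deg_le:
  assumes "finite V"
    and "nbhd V E u \<subseteq> nbhd V E v \<or> nbhd V E v \<subseteq> nbhd V E u"
    and "deg V E u \<le> deg V E v"
  shows "nbhd V E u \<subseteq> nbhd V E v"
  using assms card_seteq[of "nbhd V E u" "nbhd V E v"] by (auto simp: deg_def finite_nbhd)

lemma induced_path_5_iff:
  "induced_path A [a, b, c, d, e] \<longleftrightarrow> distinct [a, b, c, d, e]
     \<and> A a b \<and> A b c \<and> A c d \<and> A d e
     \<and> \<not> A a c \<and> \<not> A a d \<and> \<not> A a e \<and> \<not> A b d \<and> \<not> A b e \<and> \<not> A c e"
  unfolding induced_path_def by (simp add: All_less_Suc numeral_eq_Suc) blast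

lemma nested_sets_no_incomparability_P5:
  fixes N1 N2 N3 N4 N5 :: "'b set"
  assumes top: "N3 \<subseteq> N1" "N5 \<subseteq> N1"
    and path: "\<not> N5 \<subseteq> N4" "\<not> N4 \<subseteq> N1" "\<not> N2 \<subseteq> N1" "\<not> N3 \<subseteq> N2"
    and nonpath: "N5 \<subseteq> N2 \<or> N2 \<subseteq> N5" "N4 \<subseteq> N3 \<or> N3 \<subseteq> N4" "N4 \<subseteq> N2 \<or> N2 \<subseteq> N4"
  shows False
proof -
  have "N5 \<subseteq> N2" using nonpath(1) top(2) path(3) by blast
  moreover have "N3 \<subseteq> N4" using nonpath(2) top(1) path(2) by blast
  ultimately show False using nonpath(3) path(1,4) by blast
qed

theorem lemma2p3:
  fixes V :: "'a set" and E :: "'a \<Rightarrow> 'a \<Rightarrow> bool" and K I :: "'a set"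
    and v1 v2 v3 v4 v5 :: 'a
  assumes "split_graph V E K I"
    and "induced_path (factor_adj V E I) [v5, v4, v1, v2, v3]"
    and "v1 \<in> I" "v2 \<in> I" "v3 \<in> I" "v4 \<in> I" "v5 \<in> I"
  shows "\<not> (Max {deg V E v1, deg V E v2, deg V E v3, deg V E v4, deg V E v5} = deg V E v1)"
proof
  assume "Max {deg V E v1, deg V E v2, deg V E v3, deg V E v4, deg V E v5} = deg V E v1"
  then have deg_le: "deg V E v3 \<le> deg V E v1" "deg V E v5 \<le> deg V E v1"
    by (metis Max_ge finite.emptyI finite.insertI insertCI)+
  have "finite V"
    using assms(1) by (simp add: split_graph_def simple_graph_def)
  let ?N = "nbhd V E"
  from assms(2) have "distinct [v5, v4, v1, v2, v3]"
    and "factor_adj V E I v5 v4" "factor_adj V E I v4 v1"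
    and "factor_adj V E I v1 v2" "factor_adj V E I v2 v3"
    and "\<not> factor_adj V E I v5 v1" "\<not> factor_adj V E I v5 v2" "\<not> factor_adj V E I v4 v2"
    and "\<not> factor_adj V E I v4 v3" "\<not> factor_adj V E I v1 v3"
    unfolding induced_path_5_iff by simp_all
  then have incomparable:
      "\<not> ?N v5 \<subseteq> ?N v4" "\<not> ?N v4 \<subseteq> ?N v1" "\<not> ?N v2 \<subseteq> ?N v1" "\<not> ?N v3 \<subseteq> ?N v2"
    and comparable: "?N v5 \<subseteq> ?N v1 \<or> ?N v1 \<subseteq> ?N v5" "?N v5 \<subseteq> ?N v2 \<or> ?N v2 \<subseteq> ?N v5"
      "?N v4 \<subseteq> ?N v2 \<or> ?N v2 \<subseteq> ?N v4" "?N v4 \<subseteq> ?N v3 \<or> ?N v3 \<subseteq> ?N v4"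
      "?N v3 \<subseteq> ?N v1 \<or> ?N v1 \<subseteq> ?N v3"
    using assms(3-7) by (auto simp: factor_adj_iff_incomparable[OF \<open>finite V\<close>])
  have "?N v3 \<subseteq> ?N v1" "?N v5 \<subseteq> ?N v1"
    using nbhd_subset_if_comparable_deg_le[OF \<open>finite V\<close>] comparable(5,1) deg_le by blast+
  then show False
    using nested_sets_no_incomparability_P5 incomparable comparable(2-4) by blast
qed

end
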